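(* Let $W$ be an instance of MAXCUT with maximal cut $(S,\bar S)$. Let $v=\delta_S$ and let $D$ be the diagonal matrix with $D_{ii}=-v_i\sum_jW_{ij}v_j$. The following are equivalent: \begin{enumerate} \item $W$ is GW-bipolar; \item $\delta_S$ is a generalized least eigenvector of $W$; \item $W+D\succeq0$; \item the optimum of the dual GW problem (maximize $\sum_iE_{ii}$ over diagonal $E$ with $W-E\succeq0$) is attained at $E=-D$. \end{enumerate}
   Context: An instance of MAXCUT is a non-negative symmetric $n\times n$ matrix $W$ with zero diagonal and connected support; a maximal cut $(S,\bar S)$ of $\{1,\dots,n\}$ maximizes $\sum_{i\in S,j\notin S}W_{ij}$. The characteristic vector of the cut is $\delta_S\in\{1,-1\}^n$ with $(\delta_S)_i=1$ for $i\in S$ and $-1$ otherwise. A vector $u$ is a generalized least eigenvector of $W$ if $u$ is an eigenvector of $W+\Delta$ for its least eigenvalue, for some diagonal $\Delta$. The primal GW problem is: minimize $\sum_{i,j}P_{ij}W_{ij}$ subject to $P\succeq0$ and $P_{ii}=1$ for all $i$. $W$ is GW-bipolar if some optimal solution of the primal GW problem has the form $uu^T$ with $u\in\{-1,1\}^n$. *)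

theory Defs
  imports "HOL-Analysis.Analysis"
begin

definition sym_mat :: "real^'n^'n \<Rightarrow> bool" where
  "sym_mat A \<longleftrightarrow> (\<forall>i j. A$i$j = A$j$i)"

definition psd :: "real^'n^'n \<Rightarrow> bool" where
  "psd A \<longleftrightarrow> sym_mat A \<and> (\<forall>x. 0 \<le> x \<bullet> (A *v x))"

definition diagonal_mat :: "real^'n^'n \<Rightarrow> bool" where
  "diagonal_mat A \<longleftrightarrow> (\<forall>i j. i \<noteq> j \<longrightarrow> A$i$j = 0)"

definition maxcut_instance :: "real^'n^'n \<Rightarrow> bool" where
  "maxcut_instance W \<longleftrightarrow>
     sym_mat W \<and> (\<forall>i j. 0 \<le> W$i$j) \<and> (\<forall>i. W$i$i = 0) \<and>
     (\<forall>i j. (i, j) \<in> {(a, b). W$a$b > 0}\<^sup>*)"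

definition cut_weight :: "real^'n^'n \<Rightarrow> 'n set \<Rightarrow> real" where
  "cut_weight W S = (\<Sum>i\<in>S. \<Sum>j\<in>-S. W$i$j)"

definition maximal_cut :: "real^'n^'n \<Rightarrow> 'n set \<Rightarrow> bool" where
  "maximal_cut W S \<longleftrightarrow> (\<forall>T. cut_weight W T \<le> cut_weight W S)"

definition char_vec :: "'n set \<Rightarrow> real^'n" where
  "char_vec S = (\<chi> i. if i \<in> S then 1 else -1)"

definition generalized_least_eigenvector :: "real^'n^'n \<Rightarrow> real^'n \<Rightarrow> bool" where
  "generalized_least_eigenvector W u \<longleftrightarrow>
     (\<exists>\<Delta> lam. diagonal_mat \<Delta> \<and> u \<noteq> 0 \<and> (W + \<Delta>) *v u = lam *\<^sub>R u \<and>
        (\<forall>mu x. x \<noteq> 0 \<longrightarrow> (W + \<Delta>) *v x = mu *\<^sub>R x \<longrightarrow> lam \<le> mu))"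

definition gw_feasible :: "real^'n^'n \<Rightarrow> bool" where
  "gw_feasible P \<longleftrightarrow> psd P \<and> (\<forall>i. P$i$i = 1)"

definition gw_objective :: "real^'n^'n \<Rightarrow> real^'n^'n \<Rightarrow> real" where
  "gw_objective W P = (\<Sum>i\<in>UNIV. \<Sum>j\<in>UNIV. P$i$j * W$i$j)"

definition gw_primal_optimal :: "real^'n^'n \<Rightarrow> real^'n^'n \<Rightarrow> bool" where
  "gw_primal_optimal W P \<longleftrightarrow>
     gw_feasible P \<and> (\<forall>Q. gw_feasible Q \<longrightarrow> gw_objective W P \<le> gw_objective W Q)"

definition outer :: "real^'n \<Rightarrow> real^'n^'n" where
  "outer u = (\<chi> i j. u$i * u$j)"

definition gw_bipolar :: "real^'n^'n \<Rightarrow> bool" where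
  "gw_bipolar W \<longleftrightarrow>
     (\<exists>u::real^'n. (\<forall>i. u$i = 1 \<or> u$i = -1) \<and> gw_primal_optimal W (outer u))"

definition gw_dual_feasible :: "real^'n^'n \<Rightarrow> real^'n^'n \<Rightarrow> bool" where
  "gw_dual_feasible W E \<longleftrightarrow> diagonal_mat E \<and> psd (W - E)"

definition gw_dual_optimal_at :: "real^'n^'n \<Rightarrow> real^'n^'n \<Rightarrow> bool" where
  "gw_dual_optimal_at W E \<longleftrightarrow>
     gw_dual_feasible W E \<and>
     (\<forall>F. gw_dual_feasible W F \<longrightarrow> (\<Sum>i\<in>UNIV. F$i$i) \<le> (\<Sum>i\<in>UNIV. E$i$i))"

end

theory Submission
  imports Defs
begin

text \<open>
  The diagonal matrix D is chosen so that (W + D) v = 0 for the sign vector v of the cut.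
  If W + D is positive semidefinite, then -D is dual feasible with dual value v^T W v, so by weak
  duality v v^T is primal optimal; as S is a maximal cut, this is exactly GW-bipolarity.
  Conversely, if v v^T is primal optimal but y^T (W + D) y < 0, move v v^T a small step s towards
  y y^T and restore the unit diagonal by a polynomial correction: the objective then changes by
  s y^T (W + D) y + O(s^2) < 0, a contradiction. Weak duality rests on the nonnegativity of the
  Frobenius product of two positive semidefinite matrices, proved by splitting off rank-one Schur
  complements one row at a time. Finally, a diagonal shift W + \<Delta> having v as an eigenvector is
  W + D plus a multiple of the identity, so v is a least eigenvector of it exactly when the least
  eigenvalue of W + D is 0.
\<close>

section \<open>Quadratic forms and positive semidefinite matrices\<close>

lemma nonneg_quadratic_discriminant:
  fixes a b c :: real
  assumes "0 \<le> a" and nonneg: "\<And>t. 0 \<le> a * t^2 + 2 * b * t + c"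
  shows "b^2 \<le> a * c"
proof (cases "a = 0")
  case True
  have "b = 0"
  proof (rule ccontr)
    assume "b \<noteq> 0"
    have "0 \<le> c - (\<bar>c\<bar> + 1)"
      using nonneg[of "- (\<bar>c\<bar> + 1) / (2 * b)"] True \<open>b \<noteq> 0\<close> by simp
    then show False by simp
  qed
  then show ?thesis using True by simp
next
  case False
  with \<open>0 \<le> a\<close> have "0 < a" by simp
  have "0 \<le> a * (- b / a)^2 + 2 * b * (- b / a) + c" by (rule nonneg)
  also have "\<dots> = c - b^2 / a" using \<open>0 < a\<close> by (simp add: power2_eq_square field_simps)
  finally show ?thesis using \<open>0 < a\<close> by (simp add: field_simps)
qed

lemma sym_mat_inner_commute:
  assumes "sym_mat A" shows "x \<bullet> (A *v y) = y \<bullet> (A *v x)"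
proof -
  have "x \<bullet> (A *v y) = (\<Sum>i\<in>UNIV. \<Sum>j\<in>UNIV. x$i * A$i$j * y$j)"
    by (simp add: inner_vec_def matrix_vector_mult_def sum_distrib_left mult.assoc)
  also have "\<dots> = (\<Sum>j\<in>UNIV. \<Sum>i\<in>UNIV. x$i * A$i$j * y$j)"
    by (rule sum.swap)
  also have "\<dots> = y \<bullet> (A *v x)"
    using assms by (simp add: sym_mat_def inner_vec_def matrix_vector_mult_def sum_distrib_left mult_ac)
  finally show ?thesis .
qed

lemma quadratic_form_add_scaleR:
  assumes "sym_mat A"
  shows "(x + t *\<^sub>R z) \<bullet> (A *v (x + t *\<^sub>R z))
       = x \<bullet> (A *v x) + 2 * t * (z \<bullet> (A *v x)) + t^2 * (z \<bullet> (A *v z))"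
  using sym_mat_inner_commute[OF assms, of x z]
  by (simp add: matrix_vector_right_distrib matrix_vector_mult_scaleR inner_add_left inner_add_right
      power2_eq_square algebra_simps)

lemma quadratic_form_le_abs_bound:
  fixes A :: "real^'n^'n" and x a :: "real^'n"
  assumes "\<And>i j. 0 \<le> A$i$j" and "\<And>i. \<bar>x$i\<bar> \<le> a$i"
  shows "x \<bullet> (A *v x) \<le> a \<bullet> (A *v a)"
proof -
  have "x$i * (A$i$j * x$j) \<le> a$i * (A$i$j * a$j)" for i j
  proof -
    have "x$i * (A$i$j * x$j) \<le> \<bar>x$i * (A$i$j * x$j)\<bar>" by simp
    also have "\<dots> = \<bar>x$i\<bar> * (A$i$j * \<bar>x$j\<bar>)" using assms(1)[of i j] by (simp add: abs_mult)
    also have "\<dots> \<le> a$i * (A$i$j * a$j)"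
    proof (rule mult_mono[OF assms(2)])
      show "A$i$j * \<bar>x$j\<bar> \<le> A$i$j * a$j" by (rule mult_left_mono[OF assms(2) assms(1)])
      show "0 \<le> a$i" using abs_ge_zero[of "x$i"] assms(2)[of i] by linarith
      show "0 \<le> A$i$j * \<bar>x$j\<bar>" using assms(1)[of i j] by simp
    qed
    finally show ?thesis .
  qed
  then show ?thesis
    by (simp add: inner_vec_def matrix_vector_mult_def sum_distrib_left sum_mono)
qed

lemma psd_cauchy_schwarz:
  assumes "psd A"
  shows "(z \<bullet> (A *v x))^2 \<le> (z \<bullet> (A *v z)) * (x \<bullet> (A *v x))"
proof (rule nonneg_quadratic_discriminant)
  show "0 \<le> z \<bullet> (A *v z)" using assms by (simp add: psd_def)
  fix t
  have "0 \<le> (x + t *\<^sub>R z) \<bullet> (A *v (x + t *\<^sub>R z))" using assms by (simp add: psd_def)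
  also have "\<dots> = x \<bullet> (A *v x) + 2 * t * (z \<bullet> (A *v x)) + t^2 * (z \<bullet> (A *v z))"
    using assms by (simp add: psd_def quadratic_form_add_scaleR)
  finally show "0 \<le> (z \<bullet> (A *v z)) * t^2 + 2 * (z \<bullet> (A *v x)) * t + x \<bullet> (A *v x)"
    by (simp add: algebra_simps)
qed

lemma psd_quadratic_form_eq_0:
  assumes "psd A" and "x \<bullet> (A *v x) = 0"
  shows "A *v x = 0"
proof -
  have "((A *v x) \<bullet> (A *v x))^2 \<le> ((A *v x) \<bullet> (A *v (A *v x))) * (x \<bullet> (A *v x))"
    by (rule psd_cauchy_schwarz[OF assms(1)])
  then have "((A *v x) \<bullet> (A *v x))^2 \<le> 0" using assms(2) by simp
  then show ?thesis by simp
qed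

lemma inner_axis_matrix_vector_mult_axis: "axis j 1 \<bullet> (A *v axis k 1) = A$j$k"
  by (simp add: matrix_vector_mult_basis inner_axis' column_def)

lemma psd_zero_diag_imp_zero_row:
  assumes "psd A" and "A$k$k = 0"
  shows "A$k$j = 0"
proof -
  have "(A$j$k)^2 \<le> A$j$j * A$k$k"
    using psd_cauchy_schwarz[OF assms(1), of "axis j 1" "axis k 1"]
    by (simp add: inner_axis_matrix_vector_mult_axis)
  then show ?thesis using assms by (simp add: psd_def sym_mat_def)
qed

lemma psd_eigenvalue_nonneg:
  assumes "psd A" and "x \<noteq> 0" and "A *v x = \<mu> *\<^sub>R x"
  shows "0 \<le> \<mu>"
proof -
  have "0 \<le> \<mu> * (x \<bullet> x)" using assms(1,3) by (simp add: psd_def) (metis inner_scaleR_right)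
  moreover have "0 < x \<bullet> x" using assms(2) by simp
  ultimately show ?thesis by (simp add: zero_le_mult_iff)
qed

definition diag_mat :: "('n \<Rightarrow> real) \<Rightarrow> real^'n^'n" where
  "diag_mat d = (\<chi> i j. if i = j then d i else 0)"

lemma diagonal_mat_diag_mat: "diagonal_mat (diag_mat d)"
  by (simp add: diagonal_mat_def diag_mat_def)

lemma diagonal_mat_mult:
  assumes "diagonal_mat A"
  shows "A *v x = (\<chi> i. A$i$i * x$i)"
proof -
  have "(\<Sum>j\<in>UNIV. A$i$j * x$j) = (\<Sum>j\<in>UNIV. if j = i then A$i$i * x$i else 0)" for i
    using assms by (intro sum.cong) (auto simp: diagonal_mat_def)
  then show ?thesis by (simp add: vec_eq_iff matrix_vector_mult_def)
qed

lemma diag_mat_mult: "diag_mat d *v x = (\<chi> i. d i * x$i)"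
  by (simp add: diagonal_mat_mult[OF diagonal_mat_diag_mat]) (simp add: diag_mat_def)

lemma diag_mat_const_mult: "diag_mat (\<lambda>_. m) *v x = m *\<^sub>R x"
  by (simp add: diag_mat_mult vec_eq_iff)

lemma outer_mult: "outer c *v x = (c \<bullet> x) *\<^sub>R c"
  by (simp add: vec_eq_iff outer_def matrix_vector_mult_def inner_vec_def sum_distrib_left mult_ac)

lemma psd_add: "psd A \<Longrightarrow> psd B \<Longrightarrow> psd (A + B)"
  by (simp add: psd_def sym_mat_def matrix_vector_mult_add_rdistrib inner_add_right)

lemma psd_scaleR: "0 \<le> c \<Longrightarrow> psd A \<Longrightarrow> psd (c *\<^sub>R A)"
  by (simp add: psd_def sym_mat_def flip: scaleR_matrix_vector_assoc)

lemma psd_outer: "psd (outer c)"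
proof -
  have "sym_mat (outer c)" by (simp add: sym_mat_def outer_def mult.commute)
  moreover have "0 \<le> x \<bullet> (outer c *v x)" for x by (simp add: outer_mult inner_commute)
  ultimately show ?thesis by (simp add: psd_def)
qed

lemma psd_diag_mat: "(\<And>i. 0 \<le> d i) \<Longrightarrow> psd (diag_mat d)"
  by (simp add: psd_def sym_mat_def diag_mat_def diag_mat_mult[unfolded diag_mat_def]
      inner_vec_def sum_nonneg mult_left_mono mult.left_commute)

lemma psd_schur_complement:
  assumes "psd A" and pos: "0 < A$k$k"
  defines "S \<equiv> A - (1 / A$k$k) *\<^sub>R outer (column k A)"
  shows "psd S" and "S$k$j = 0"
proof -
  have sym: "sym_mat A" using assms(1) by (simp add: psd_def)
  then have col: "axis k 1 \<bullet> (A *v x) = column k A \<bullet> x" for x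
    unfolding sym_mat_def inner_axis'
    by (simp add: column_def inner_vec_def matrix_vector_mult_def mult.commute)
  have "0 \<le> x \<bullet> (S *v x)" for x
  proof -
    define t where "t = - (column k A \<bullet> x) / A$k$k"
    have "0 \<le> (x + t *\<^sub>R axis k 1) \<bullet> (A *v (x + t *\<^sub>R axis k 1))"
      using assms(1) by (simp add: psd_def)
    also have "\<dots> = x \<bullet> (A *v x) + 2 * t * (column k A \<bullet> x) + t^2 * A$k$k"
      by (simp only: quadratic_form_add_scaleR[OF sym] inner_axis_matrix_vector_mult_axis col)
    also have "\<dots> = x \<bullet> (S *v x)"
      using pos by (simp add: S_def t_def outer_mult matrix_vector_mult_diff_rdistrib
          inner_diff_right power2_eq_square inner_commute field_simps flip: scaleR_matrix_vector_assoc)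
    finally show ?thesis .
  qed
  moreover have "sym_mat S" using sym by (simp add: S_def sym_mat_def outer_def mult.commute)
  ultimately show "psd S" by (simp add: psd_def)
  show "S$k$j = 0" using sym pos by (simp add: S_def outer_def column_def sym_mat_def)
qed

lemma sym_mat_least_eigenpair:
  fixes B :: "real^'n^'n"
  assumes "sym_mat B"
  obtains x m where "x \<noteq> 0" and "B *v x = m *\<^sub>R x" and "psd (B - diag_mat (\<lambda>_. m))"
proof -
  have "continuous_on (sphere 0 1) (\<lambda>x. x \<bullet> (B *v x))"
    by (intro continuous_intros)
  moreover have "sphere (0::real^'n) 1 \<noteq> {}" by simp
  ultimately obtain x where x: "x \<in> sphere 0 1"
    and min: "\<And>y. y \<in> sphere 0 1 \<Longrightarrow> x \<bullet> (B *v x) \<le> y \<bullet> (B *v y)"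
    using continuous_attains_inf[OF compact_sphere] by blast
  define m where "m = x \<bullet> (B *v x)"
  define C where "C = B - diag_mat (\<lambda>_. m)"
  have C_form: "y \<bullet> (C *v y) = y \<bullet> (B *v y) - m * (y \<bullet> y)" for y
    by (simp add: C_def matrix_vector_mult_diff_rdistrib diag_mat_const_mult inner_diff_right)
  have "m * (y \<bullet> y) \<le> y \<bullet> (B *v y)" for y
  proof (cases "y = 0")
    case False
    then have "m \<le> (y /\<^sub>R norm y) \<bullet> (B *v (y /\<^sub>R norm y))"
      unfolding m_def by (intro min) simp
    also have "\<dots> = (y \<bullet> (B *v y)) / (y \<bullet> y)"
      by (simp add: matrix_vector_mult_scaleR power2_norm_eq_inner[symmetric] power2_eq_square
          divide_inverse)
    finally show ?thesis using False by (simp add: pos_le_divide_eq)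
  qed simp
  then have "psd C"
    using assms by (simp add: psd_def C_form) (simp add: C_def sym_mat_def diag_mat_def)
  moreover have "x \<bullet> (C *v x) = 0"
    using x by (simp add: C_form m_def norm_eq_1)
  ultimately have "C *v x = 0" by (rule psd_quadratic_form_eq_0)
  then have "B *v x = m *\<^sub>R x"
    by (simp add: C_def matrix_vector_mult_diff_rdistrib diag_mat_const_mult)
  moreover have "x \<noteq> 0" using x by auto
  ultimately show ?thesis using that \<open>psd C\<close> C_def by blast
qed

section \<open>The Goemans--Williamson objective and weak duality\<close>

lemma gw_objective_outer: "gw_objective A (outer c) = c \<bullet> (A *v c)"
  by (simp add: gw_objective_def outer_def inner_vec_def matrix_vector_mult_def sum_distrib_left mult_ac)

lemma gw_objective_add: "gw_objective A (P + Q) = gw_objective A P + gw_objective A Q"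
  by (simp add: gw_objective_def sum.distrib distrib_right)

lemma gw_objective_diff: "gw_objective A (P - Q) = gw_objective A P - gw_objective A Q"
  by (simp add: gw_objective_def sum_subtractf left_diff_distrib)

lemma gw_objective_scaleR: "gw_objective A (c *\<^sub>R P) = c * gw_objective A P"
  by (simp add: gw_objective_def sum_distrib_left mult.assoc)

lemma gw_objective_diff_left: "gw_objective (A - B) P = gw_objective A P - gw_objective B P"
  by (simp add: gw_objective_def sum_subtractf right_diff_distrib)

lemma gw_objective_diagonal_mat_left:
  assumes "diagonal_mat A"
  shows "gw_objective A P = (\<Sum>i\<in>UNIV. A$i$i * P$i$i)"
proof -
  have "(\<Sum>j\<in>UNIV. P$i$j * A$i$j) = (\<Sum>j\<in>UNIV. if j = i then A$i$i * P$i$i else 0)" for i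
    using assms by (intro sum.cong) (auto simp: diagonal_mat_def)
  then show ?thesis by (simp add: gw_objective_def)
qed

lemma gw_objective_diagonal_mat_right:
  assumes "diagonal_mat P"
  shows "gw_objective A P = (\<Sum>i\<in>UNIV. P$i$i * A$i$i)"
proof -
  have "(\<Sum>j\<in>UNIV. P$i$j * A$i$j) = (\<Sum>j\<in>UNIV. if j = i then P$i$i * A$i$i else 0)" for i
    using assms by (intro sum.cong) (auto simp: diagonal_mat_def)
  then show ?thesis by (simp add: gw_objective_def)
qed

lemma gw_objective_psd_nonneg_supported:
  assumes "finite K" and "psd A" and "psd Q" and "\<And>i j. i \<notin> K \<Longrightarrow> Q$i$j = 0"
  shows "0 \<le> gw_objective A Q"
  using assms(1,3,4)
proof (induction K arbitrary: Q rule: finite_induct)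
  case empty
  then show ?case by (simp add: gw_objective_def)
next
  case (insert k K)
  show ?case
  proof (cases "Q$k$k = 0")
    case kk: True
    have "Q$i$j = 0" if "i \<notin> K" for i j
    proof (cases "i = k")
      case True
      then show ?thesis using psd_zero_diag_imp_zero_row[OF insert.prems(1) kk] by simp
    next
      case False
      then show ?thesis using insert.prems(2) that by simp
    qed
    then show ?thesis using insert.IH[OF insert.prems(1)] by blast
  next
    case False
    have "0 \<le> axis k 1 \<bullet> (Q *v axis k 1)"
      using insert.prems(1) unfolding psd_def by blast
    with False have pos: "0 < Q$k$k" by (simp add: inner_axis_matrix_vector_mult_axis)
    define S where "S = Q - (1 / Q$k$k) *\<^sub>R outer (column k Q)"
    have "0 \<le> gw_objective A S"
    proof (rule insert.IH)
      show "psd S" unfolding S_def by (rule psd_schur_complement(1)[OF insert.prems(1) pos])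
      fix i j assume "i \<notin> K"
      show "S$i$j = 0"
      proof (cases "i = k")
        case True
        show ?thesis unfolding S_def True by (rule psd_schur_complement(2)[OF insert.prems(1) pos])
      next
        case False
        then have "Q$i$j = 0" "Q$i$k = 0" using insert.prems(2) \<open>i \<notin> K\<close> by auto
        then show ?thesis by (simp add: S_def outer_def column_def)
      qed
    qed
    moreover have "0 \<le> gw_objective A (outer (column k Q)) / Q$k$k"
      using assms(2) pos by (simp add: gw_objective_outer psd_def)
    moreover have "gw_objective A Q = gw_objective A S + gw_objective A (outer (column k Q)) / Q$k$k"
      by (simp add: S_def gw_objective_diff gw_objective_scaleR)
    ultimately show ?thesis by simp
  qed
qed

lemma gw_objective_psd_nonneg: "psd A \<Longrightarrow> psd Q \<Longrightarrow> 0 \<le> gw_objective A Q"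
  by (rule gw_objective_psd_nonneg_supported[of UNIV]) auto

lemma gw_weak_duality:
  assumes "gw_feasible P" and "gw_dual_feasible W F"
  shows "(\<Sum>i\<in>UNIV. F$i$i) \<le> gw_objective W P"
proof -
  have "gw_objective F P = (\<Sum>i\<in>UNIV. F$i$i)"
    using assms by (simp add: gw_objective_diagonal_mat_left gw_dual_feasible_def gw_feasible_def)
  moreover have "0 \<le> gw_objective (W - F) P"
    using assms by (simp add: gw_objective_psd_nonneg gw_feasible_def gw_dual_feasible_def)
  ultimately show ?thesis by (simp add: gw_objective_diff_left)
qed

section \<open>Sign vectors and the diagonal correction of a cut\<close>

definition sign_vector :: "real^'n \<Rightarrow> bool" where
  "sign_vector u \<longleftrightarrow> (\<forall>i. u$i = 1 \<or> u$i = -1)"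

lemma sign_vector_mult_self: "sign_vector u \<Longrightarrow> u$i * u$i = 1"
  by (auto simp: sign_vector_def dest: spec[of _ i])

lemma sign_vector_nonzero: "sign_vector u \<Longrightarrow> u \<noteq> 0"
  by (auto simp: sign_vector_def dest: spec[of _ undefined])

lemma sign_vector_char_vec: "sign_vector (char_vec S)"
  by (simp add: sign_vector_def char_vec_def)

lemma sign_vector_eq_char_vec: "sign_vector u \<Longrightarrow> u = char_vec {i. u$i = 1}"
  by (auto simp: sign_vector_def char_vec_def vec_eq_iff dest: spec)

lemma gw_feasible_outer: "sign_vector u \<Longrightarrow> gw_feasible (outer u)"
  using psd_outer[of u] by (simp add: gw_feasible_def outer_def sign_vector_mult_self)

lemma gw_objective_outer_char_vec:
  assumes "sym_mat W"
  shows "gw_objective W (outer (char_vec T)) = (\<Sum>i\<in>UNIV. \<Sum>j\<in>UNIV. W$i$j) - 4 * cut_weight W T"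
proof -
  let ?x = "char_vec T"
  let ?cut = "\<lambda>i j. if i \<in> T then if j \<in> -T then W$i$j else 0 else 0"
  have entry: "?x$i * ?x$j * W$i$j = W$i$j - 2 * ?cut i j - 2 * ?cut j i" for i j
    using assms unfolding sym_mat_def char_vec_def by auto
  have "(\<Sum>i\<in>UNIV. \<Sum>j\<in>UNIV. ?cut i j)
      = (\<Sum>i\<in>UNIV. if i \<in> T then \<Sum>j\<in>UNIV. if j \<in> -T then W$i$j else 0 else 0)"
    by (intro sum.cong) auto
  also have "\<dots> = cut_weight W T"
    unfolding cut_weight_def by (simp add: sum.inter_restrict[symmetric] del: Compl_iff)
  finally have cut: "(\<Sum>i\<in>UNIV. \<Sum>j\<in>UNIV. ?cut i j) = cut_weight W T" .
  have cut': "(\<Sum>i\<in>UNIV. \<Sum>j\<in>UNIV. ?cut j i) = cut_weight W T"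
    using cut by (subst sum.swap) simp
  show ?thesis
    unfolding gw_objective_def outer_def
    by (simp add: mult.commute[of "W$_$_"] entry sum_subtractf cut cut' flip: sum_distrib_left del: Compl_iff)
qed

lemma gw_bipolar_iff_gw_primal_optimal_max_cut:
  assumes "sym_mat W" and "maximal_cut W S"
  shows "gw_bipolar W \<longleftrightarrow> gw_primal_optimal W (outer (char_vec S))"
proof
  assume "gw_bipolar W"
  then obtain u where u: "sign_vector u" and opt: "gw_primal_optimal W (outer u)"
    unfolding gw_bipolar_def sign_vector_def by blast
  obtain T where u_T: "u = char_vec T" using sign_vector_eq_char_vec[OF u] by blast
  have "cut_weight W T \<le> cut_weight W S"
    using assms(2) by (simp add: maximal_cut_def)
  then have "gw_objective W (outer (char_vec S)) \<le> gw_objective W (outer u)"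
    by (simp add: u_T gw_objective_outer_char_vec[OF assms(1)])
  then show "gw_primal_optimal W (outer (char_vec S))"
    using opt sign_vector_char_vec gw_feasible_outer
    unfolding gw_primal_optimal_def by fastforce
next
  assume "gw_primal_optimal W (outer (char_vec S))"
  then show "gw_bipolar W"
    using sign_vector_char_vec unfolding gw_bipolar_def sign_vector_def by blast
qed

definition cut_diag :: "real^'n^'n \<Rightarrow> real^'n \<Rightarrow> real^'n^'n" where
  "cut_diag W v = diag_mat (\<lambda>i. - v$i * (W *v v)$i)"

lemma cut_diag_mult_self:
  assumes "sign_vector v"
  shows "(W + cut_diag W v) *v v = 0"
  using sign_vector_mult_self[OF assms]
  by (simp add: cut_diag_def matrix_vector_mult_add_rdistrib diag_mat_mult vec_eq_iff mult_ac)

lemma sum_cut_diag: "(\<Sum>i\<in>UNIV. cut_diag W v $i$i) = - (v \<bullet> (W *v v))"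
  by (simp add: cut_diag_def diag_mat_def inner_vec_def sum_negf)

lemma sym_mat_add_cut_diag: "sym_mat W \<Longrightarrow> sym_mat (W + cut_diag W v)"
  by (simp add: sym_mat_def cut_diag_def diag_mat_def)

lemma gw_dual_feasible_neg_cut_diag:
  "gw_dual_feasible W (- cut_diag W v) \<longleftrightarrow> psd (W + cut_diag W v)"
  by (simp add: gw_dual_feasible_def diagonal_mat_def cut_diag_def diag_mat_def)

lemma gw_dual_optimal_at_iff_psd:
  assumes "sign_vector v"
  shows "gw_dual_optimal_at W (- cut_diag W v) \<longleftrightarrow> psd (W + cut_diag W v)"
proof
  assume psd: "psd (W + cut_diag W v)"
  have "(\<Sum>i\<in>UNIV. F$i$i) \<le> (\<Sum>i\<in>UNIV. (- cut_diag W v)$i$i)" if "gw_dual_feasible W F" for F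
    using gw_weak_duality[OF gw_feasible_outer[OF assms] that]
    by (simp add: gw_objective_outer sum_cut_diag sum_negf)
  then show "gw_dual_optimal_at W (- cut_diag W v)"
    using psd by (simp add: gw_dual_optimal_at_def gw_dual_feasible_neg_cut_diag)
qed (simp add: gw_dual_optimal_at_def gw_dual_feasible_neg_cut_diag)

lemma gw_primal_optimal_outer_if_psd:
  assumes "sign_vector v" and "psd (W + cut_diag W v)"
  shows "gw_primal_optimal W (outer v)"
proof -
  have "gw_objective W (outer v) \<le> gw_objective W Q" if "gw_feasible Q" for Q
    using gw_weak_duality[OF that, of W "- cut_diag W v"] assms(2)
    by (simp add: gw_dual_feasible_neg_cut_diag gw_objective_outer sum_cut_diag sum_negf)
  then show ?thesis by (simp add: gw_primal_optimal_def gw_feasible_outer[OF assms(1)])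
qed

lemma diagonal_shift_sign_vector_eigenvector:
  assumes "diagonal_mat \<Delta>" and "sign_vector v" and "(W + \<Delta>) *v v = lam *\<^sub>R v"
  shows "\<Delta> = cut_diag W v + diag_mat (\<lambda>_. lam)"
proof -
  have "\<Delta>$i$i = - v$i * (W *v v)$i + lam" for i
  proof -
    have "(W *v v)$i + \<Delta>$i$i * v$i = lam * v$i"
      using assms(3) by (simp add: matrix_vector_mult_add_rdistrib diagonal_mat_mult[OF assms(1)] vec_eq_iff)
    moreover have "v$i = 1 \<or> v$i = -1" using assms(2) by (simp add: sign_vector_def)
    ultimately show ?thesis by (auto simp: algebra_simps)
  qed
  then show ?thesis
    using assms(1) by (simp add: vec_eq_iff cut_diag_def diag_mat_def diagonal_mat_def)
qed

lemma generalized_least_eigenvector_iff_psd: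
  assumes "sym_mat W" and "sign_vector v"
  shows "generalized_least_eigenvector W v \<longleftrightarrow> psd (W + cut_diag W v)"
proof
  assume "generalized_least_eigenvector W v"
  then obtain \<Delta> lam where "diagonal_mat \<Delta>" and "(W + \<Delta>) *v v = lam *\<^sub>R v"
    and least: "\<And>\<mu> x. x \<noteq> 0 \<Longrightarrow> (W + \<Delta>) *v x = \<mu> *\<^sub>R x \<Longrightarrow> lam \<le> \<mu>"
    unfolding generalized_least_eigenvector_def by blast
  then have \<Delta>: "W + \<Delta> = (W + cut_diag W v) + diag_mat (\<lambda>_. lam)"
    using diagonal_shift_sign_vector_eigenvector[OF _ assms(2)] by (simp add: add.assoc)
  obtain x m where "x \<noteq> 0" and "(W + cut_diag W v) *v x = m *\<^sub>R x"
    and shifted: "psd (W + cut_diag W v - diag_mat (\<lambda>_. m))"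
    using sym_mat_least_eigenpair[OF sym_mat_add_cut_diag[OF assms(1)]] by blast
  then have "(W + \<Delta>) *v x = (m + lam) *\<^sub>R x"
    by (simp add: \<Delta> matrix_vector_mult_add_rdistrib diag_mat_const_mult scaleR_add_left)
  with least \<open>x \<noteq> 0\<close> have "0 \<le> m" by fastforce
  then have "psd (W + cut_diag W v - diag_mat (\<lambda>_. m) + diag_mat (\<lambda>_. m))"
    by (intro psd_add shifted psd_diag_mat)
  then show "psd (W + cut_diag W v)" by simp
next
  assume psd: "psd (W + cut_diag W v)"
  show "generalized_least_eigenvector W v"
    unfolding generalized_least_eigenvector_def
  proof (intro exI conjI allI impI)
    show "diagonal_mat (cut_diag W v)" unfolding cut_diag_def by (rule diagonal_mat_diag_mat)
    show "v \<noteq> 0" using assms(2) by (rule sign_vector_nonzero)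
    show "(W + cut_diag W v) *v v = 0 *\<^sub>R v" using cut_diag_mult_self[OF assms(2)] by simp
    show "0 \<le> \<mu>" if "x \<noteq> 0" and "(W + cut_diag W v) *v x = \<mu> *\<^sub>R x" for \<mu> x
      using psd_eigenvalue_nonneg[OF psd that] .
  qed
qed

section \<open>Perturbing a rank-one solution\<close>

lemma small_quadratic_neg:
  fixes b K u :: real
  assumes "b < 0" and "0 < u"
  shows "\<exists>s. 0 < s \<and> s \<le> u \<and> s * b + s^2 * K < 0"
proof (intro exI conjI)
  define s where "s = min u (- b / (\<bar>K\<bar> + 1))"
  show "0 < s" "s \<le> u" using assms by (auto simp: s_def divide_neg_pos)
  have "s * \<bar>K\<bar> \<le> - b / (\<bar>K\<bar> + 1) * \<bar>K\<bar>"
    unfolding s_def by (intro mult_right_mono) auto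
  also have "\<dots> < - b" using assms by (simp add: field_simps)
  moreover have "s * K \<le> s * \<bar>K\<bar>" using \<open>0 < s\<close> by (intro mult_left_mono) auto
  ultimately have "b + s * K < 0" by linarith
  then show "s * b + s^2 * K < 0"
    using \<open>0 < s\<close> by (simp add: power2_eq_square mult_pos_neg distrib_left[symmetric] mult.assoc)
qed

(* A polynomial substitute for rescaling v v^T + s y y^T to unit diagonal: with e = s y_i^2,
   (1 - e/2 - e^2/2)^2 + e + e^2 (1 - e) (3 + e) / 4 = 1, and the diagonal term is O(s^2). *)
definition perturbed_cut :: "real^'n \<Rightarrow> real^'n \<Rightarrow> real \<Rightarrow> real^'n^'n" where
  "perturbed_cut v y s =
     outer (v - (\<chi> i. (s * (y$i)^2 / 2 + (s * (y$i)^2)^2 / 2) * v$i))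
     + s *\<^sub>R outer y
     + diag_mat (\<lambda>i. (s * (y$i)^2)^2 * (1 - s * (y$i)^2) * (3 + s * (y$i)^2) / 4)"

lemma gw_feasible_perturbed_cut:
  assumes "sign_vector v" and "0 \<le> s" and "\<And>i. s * (y$i)^2 \<le> 1"
  shows "gw_feasible (perturbed_cut v y s)"
proof -
  have "psd (perturbed_cut v y s)"
    unfolding perturbed_cut_def using assms(2,3)
    by (intro psd_add psd_outer psd_scaleR psd_diag_mat) (simp_all add: diff_le_eq)
  moreover have "perturbed_cut v y s $i$i = 1" for i
  proof -
    define e where "e = s * (y$i)^2"
    have "perturbed_cut v y s $i$i
        = (v$i * v$i) * (1 - e / 2 - e^2 / 2)^2 + e + e^2 * (1 - e) * (3 + e) / 4"
      by (simp add: perturbed_cut_def outer_def diag_mat_def e_def) (simp add: power2_eq_square algebra_simps)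
    also have "\<dots> = 1"
      using sign_vector_mult_self[OF assms(1)] by (simp add: power2_eq_square field_simps)
    finally show ?thesis .
  qed
  ultimately show ?thesis by (simp add: gw_feasible_def)
qed

lemma gw_objective_perturbed_cut_bound:
  fixes W :: "real^'n^'n"
  assumes "sym_mat W" and "\<And>i. W$i$i = 0" and "\<And>i j. 0 \<le> W$i$j" and "sign_vector v"
  obtains K where "\<And>s. 0 \<le> s \<Longrightarrow> s \<le> 1 \<Longrightarrow> gw_objective W (perturbed_cut v y s)
      \<le> v \<bullet> (W *v v) + s * (y \<bullet> ((W + cut_diag W v) *v y)) + s^2 * K"
proof -
  define d where "d i = - v$i * (W *v v)$i" for i
  define p where "p = (\<chi> i. ((y$i)^2 + (y$i)^4) / 2)"
  define K where "K = (\<Sum>i\<in>UNIV. \<bar>d i\<bar> * (y$i)^4) + p \<bullet> (W *v p)"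
  have "gw_objective W (perturbed_cut v y s)
      \<le> v \<bullet> (W *v v) + s * (y \<bullet> ((W + cut_diag W v) *v y)) + s^2 * K"
    if "0 \<le> s" and "s \<le> 1" for s
  proof -
    define q where "q i = s * (y$i)^2 / 2 + (s * (y$i)^2)^2 / 2" for i
    define u where "u = (\<chi> i. q i * v$i)"
    have objective: "gw_objective W (perturbed_cut v y s) = (v - u) \<bullet> (W *v (v - u)) + s * (y \<bullet> (W *v y))"
      using assms(2) by (simp add: perturbed_cut_def gw_objective_add gw_objective_scaleR gw_objective_outer
          gw_objective_diagonal_mat_right diagonal_mat_diag_mat u_def q_def)
    have expand: "(v - u) \<bullet> (W *v (v - u)) = v \<bullet> (W *v v) - 2 * (u \<bullet> (W *v v)) + u \<bullet> (W *v u)"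
      using sym_mat_inner_commute[OF assms(1), of u v]
      by (simp add: matrix_vector_mult_diff_distrib inner_diff_left inner_diff_right)
    have "- 2 * (u \<bullet> (W *v v)) = (\<Sum>i\<in>UNIV. s * (d i * (y$i)^2) + s^2 * (d i * (y$i)^4))"
      by (simp add: inner_vec_def sum_distrib_left u_def q_def d_def power2_eq_square power4_eq_xxxx
          algebra_simps flip: sum_negf)
    also have "\<dots> \<le> (\<Sum>i\<in>UNIV. s * (d i * (y$i)^2) + s^2 * (\<bar>d i\<bar> * (y$i)^4))"
      by (intro sum_mono add_left_mono mult_left_mono mult_right_mono) auto
    finally have linear: "- 2 * (u \<bullet> (W *v v))
        \<le> s * (\<Sum>i\<in>UNIV. d i * (y$i)^2) + s^2 * (\<Sum>i\<in>UNIV. \<bar>d i\<bar> * (y$i)^4)"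
      by (simp add: sum.distrib sum_distrib_left)
    have "\<bar>u$i\<bar> \<le> (s *\<^sub>R p)$i" for i
    proof -
      have "\<bar>v$i\<bar> = 1" using assms(4) by (auto simp: sign_vector_def dest: spec[of _ i])
      then have "\<bar>u$i\<bar> = q i" using that by (simp add: u_def q_def abs_mult)
      moreover have "s^2 * (y$i)^4 \<le> s * (y$i)^4"
        using that by (intro mult_right_mono) (auto simp: power2_eq_square mult_left_le_one_le)
      ultimately show ?thesis by (simp add: q_def p_def power_mult_distrib field_simps)
    qed
    then have "u \<bullet> (W *v u) \<le> (s *\<^sub>R p) \<bullet> (W *v (s *\<^sub>R p))"
      using assms(3) by (rule quadratic_form_le_abs_bound[rotated])
    then have quadratic: "u \<bullet> (W *v u) \<le> s^2 * (p \<bullet> (W *v p))"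
      by (simp add: matrix_vector_mult_scaleR power2_eq_square)
    have "y \<bullet> (cut_diag W v *v y) = (\<Sum>i\<in>UNIV. d i * (y$i)^2)"
      by (simp add: cut_diag_def diag_mat_mult inner_vec_def d_def power2_eq_square mult_ac)
    then have form: "y \<bullet> ((W + cut_diag W v) *v y) = y \<bullet> (W *v y) + (\<Sum>i\<in>UNIV. d i * (y$i)^2)"
      by (simp add: matrix_vector_mult_add_rdistrib inner_add_right)
    show ?thesis
      unfolding objective expand form K_def using linear quadratic by (simp add: algebra_simps)
  qed
  then show ?thesis using that by blast
qed

lemma psd_if_gw_primal_optimal_outer:
  fixes W :: "real^'n^'n"
  assumes "sym_mat W" and "\<And>i. W$i$i = 0" and "\<And>i j. 0 \<le> W$i$j" and "sign_vector v"
    and "gw_primal_optimal W (outer v)"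
  shows "psd (W + cut_diag W v)"
proof (rule ccontr)
  assume "\<not> psd (W + cut_diag W v)"
  then obtain y where neg: "y \<bullet> ((W + cut_diag W v) *v y) < 0"
    using sym_mat_add_cut_diag[OF assms(1)] by (auto simp: psd_def not_le)
  obtain K where bound: "\<And>s. 0 \<le> s \<Longrightarrow> s \<le> 1 \<Longrightarrow> gw_objective W (perturbed_cut v y s)
      \<le> v \<bullet> (W *v v) + s * (y \<bullet> ((W + cut_diag W v) *v y)) + s^2 * K"
    using gw_objective_perturbed_cut_bound[OF assms(1-4)] by blast
  obtain s where "0 < s" and s_le: "s \<le> 1 / (1 + y \<bullet> y)"
    and gain: "s * (y \<bullet> ((W + cut_diag W v) *v y)) + s^2 * K < 0"
    using small_quadratic_neg[OF neg, of "1 / (1 + y \<bullet> y)" K] by (auto simp: add_pos_nonneg)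
  have "s + s * (y \<bullet> y) \<le> 1"
    using s_le by (simp add: le_divide_eq add_pos_nonneg distrib_left)
  moreover have "0 \<le> s * (y \<bullet> y)" using \<open>0 < s\<close> by simp
  ultimately have "s \<le> 1" and "s * (y \<bullet> y) \<le> 1"
    using \<open>0 < s\<close> by linarith+
  moreover have "s * (y$i)^2 \<le> s * (y \<bullet> y)" for i
    using \<open>0 < s\<close> member_le_sum[of i UNIV "\<lambda>j. y$j * y$j"]
    by (simp add: inner_vec_def power2_eq_square)
  ultimately have "gw_feasible (perturbed_cut v y s)"
    using gw_feasible_perturbed_cut[OF assms(4)] \<open>0 < s\<close> by (meson less_imp_le order_trans)
  then have "gw_objective W (outer v) \<le> gw_objective W (perturbed_cut v y s)"
    using assms(5) by (simp add: gw_primal_optimal_def)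
  also have "\<dots> < v \<bullet> (W *v v)"
    using bound[of s] \<open>0 < s\<close> \<open>s \<le> 1\<close> gain by simp
  finally show False by (simp add: gw_objective_outer)
qed

theorem theorem7:
  fixes W :: "real^'n^'n" and S :: "'n set" and v :: "real^'n" and D :: "real^'n^'n"
  assumes "maxcut_instance W"
    and "maximal_cut W S"
    and "v = char_vec S"
    and "D = (\<chi> i j. if i = j then - v$i * (\<Sum>k\<in>UNIV. W$i$k * v$k) else 0)"
  shows "(gw_bipolar W \<longleftrightarrow> generalized_least_eigenvector W v)
       \<and> (generalized_least_eigenvector W v \<longleftrightarrow> psd (W + D))
       \<and> (psd (W + D) \<longleftrightarrow> gw_dual_optimal_at W (- D))"
proof -
  have sym: "sym_mat W" and diag: "\<And>i. W$i$i = 0" and nonneg: "\<And>i j. 0 \<le> W$i$j"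
    using assms(1) by (auto simp: maxcut_instance_def)
  have v: "sign_vector v" using assms(3) by (simp add: sign_vector_char_vec)
  have D: "D = cut_diag W v"
    unfolding assms(4) cut_diag_def diag_mat_def matrix_vector_mult_def by (simp add: vec_eq_iff)
  have "gw_bipolar W \<longleftrightarrow> psd (W + D)"
    using gw_bipolar_iff_gw_primal_optimal_max_cut[OF sym assms(2)] assms(3) D
      psd_if_gw_primal_optimal_outer[OF sym diag nonneg v] gw_primal_optimal_outer_if_psd[OF v]
    by blast
  moreover have "generalized_least_eigenvector W v \<longleftrightarrow> psd (W + D)"
    using generalized_least_eigenvector_iff_psd[OF sym v] D by simp
  moreover have "psd (W + D) \<longleftrightarrow> gw_dual_optimal_at W (- D)"
    using gw_dual_optimal_at_iff_psd[OF v] D by simp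
  ultimately show ?thesis by blast
qed

end
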